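(* In every run of the algorithm described in the context, at every time and for every $i\in\{1,\dots,n\}$, the sequence $history_i[0..w\_sync_i[i]]$ is a prefix of the sequence $history_w[0..w\_sync_w[w]]$.
   Context: Model. There are $n$ asynchronous processes $p_1,\dots,p_n$, of which up to $t<n/2$ may crash; a process runs its algorithm correctly until it crashes. Each ordered pair of processes is linked by a reliable (no loss, corruption, duplication or creation), asynchronous, not necessarily FIFO channel. $p_w$ is the single writer, invoking writes sequentially; $v_0$ is the initial value. Messages: $\textsc{write}(b,v)$ with $b\in\{0,1\}$, which stands for the two types $\textsc{write0}(v)$ and $\textsc{write1}(v)$; $\textsc{read}()$; $\textsc{proceed}()$. Variables of $p_i$. These are: $history_i$ with $history_i[0]=v_0$; $w\_sync_i[1..n]$, initially all $0$; $r\_sync_i[1..n]$, initially all $0$. $\mathsf{write}(v)$ by $p_w$: $wsn\gets w\_sync_w[w]+1$; $w\_sync_w[w]\gets wsn$; $history_w[wsn]\gets v$. Send $\textsc{write}(wsn\bmod 2,v)$ to each $p_j$ with $w\_sync_w[j]=wsn-1$. Wait until at least $n-t$ indices $j$ have $w\_sync_w[j]=wsn$. Return. $\mathsf{read}()$ by $p_i$: $r\_sync_i[i]\gets r\_sync_i[i]+1$ and call the new value $rsn$. Send $\textsc{read}()$ to all $p_j$ with $j\ne i$. Wait until at least $n-t$ indices $j$ have $r\_sync_i[j]=rsn$. Let $sn\gets w\_sync_i[i]$. Wait until at least $n-t$ indices $j$ have $w\_sync_i[j]\ge sn$. Return $history_i[sn]$. On receipt of $\textsc{write}(b,v)$ from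 $p_j$ at $p_i$: Wait until $b=(w\_sync_i[j]+1)\bmod 2$. Let $wsn\gets w\_sync_i[j]+1$. If $wsn=w\_sync_i[i]+1$, then set $w\_sync_i[i]\gets wsn$ and $history_i[wsn]\gets v$, and send $\textsc{write}(wsn\bmod 2,v)$ to each $p_\ell$ with $w\_sync_i[\ell]=wsn-1$. Else, if $wsn<w\_sync_i[i]$, send $\textsc{write}((wsn+1)\bmod 2,history_i[wsn+1])$ to $p_j$. Finally set $w\_sync_i[j]\gets wsn$. On receipt of $\textsc{read}()$ from $p_j$ at $p_i$: Let $sn\gets w\_sync_i[i]$; wait until $w\_sync_i[j]\ge sn$; send $\textsc{proceed}()$ to $p_j$. On receipt of $\textsc{proceed}()$ from $p_j$ at $p_i$: $r\_sync_i[j]\gets r\_sync_i[j]+1$. Message handlers run concurrently; a waiting handler does not block the reception of other messages. *)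

theory Defs
  imports Main "HOL-Library.Multiset" "HOL-Library.Sublist"
begin

text \<open>Processes are numbered 1..n; p_w is the writer. Messages: WRITE(b,v) with b in {0,1},
  READ(), PROCEED().\<close>

datatype 'v msg = WriteM nat 'v | ReadM | ProceedM

text \<open>Control state of the (sequential) operation currently executed by a process:
  Idle; W wsn = write with sequence number wsn waiting for n-t acknowledgements;
  R1 rsn = read waiting for n-t PROCEED rounds; R2 sn = read waiting for n-t w_sync entries >= sn.\<close>
datatype opst = Idle | W nat | R1 nat | R2 nat

record 'v conf =
  hist :: "nat \<Rightarrow> nat \<Rightarrow> 'v"          \<comment> \<open>hist s i k = history_i[k]\<close>
  wsync :: "nat \<Rightarrow> nat \<Rightarrow> nat"        \<comment> \<open>wsync s i j = w_sync_i[j]\<close>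
  rsync :: "nat \<Rightarrow> nat \<Rightarrow> nat"        \<comment> \<open>rsync s i j = r_sync_i[j]\<close>
  opc :: "nat \<Rightarrow> opst"
  pend :: "(nat \<times> nat \<times> nat) multiset"  \<comment> \<open>(i,j,sn): READ handler at p_i for p_j, waiting for w_sync_i[j] >= sn\<close>
  net :: "(nat \<times> nat \<times> 'v msg) multiset"  \<comment> \<open>(src,dst,m): sent, not yet handled\<close>
  crashed :: "nat set"

definition procs :: "nat \<Rightarrow> nat set" where "procs n = {1..n}"

definition sendto :: "nat \<Rightarrow> nat set \<Rightarrow> 'v msg \<Rightarrow> (nat \<times> nat \<times> 'v msg) multiset" where
  "sendto p S m = mset_set ((\<lambda>j. (p, j, m)) ` S)"

definition init_conf :: "nat \<Rightarrow> 'v \<Rightarrow> 'v conf \<Rightarrow> bool" where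
  "init_conf n v0 s \<longleftrightarrow>
     (\<forall>i. hist s i 0 = v0) \<and> wsync s = (\<lambda>_ _. 0) \<and> rsync s = (\<lambda>_ _. 0) \<and>
     opc s = (\<lambda>_. Idle) \<and> pend s = {#} \<and> net s = {#} \<and> crashed s = {}"

inductive step :: "nat \<Rightarrow> nat \<Rightarrow> nat \<Rightarrow> 'v conf \<Rightarrow> 'v conf \<Rightarrow> bool"
  for n t w :: nat where
  write_inv:
  "\<lbrakk> w \<notin> crashed s; opc s w = Idle; wsn = wsync s w w + 1 \<rbrakk> \<Longrightarrow>
   step n t w s
    (s\<lparr> wsync := (wsync s)(w := (wsync s w)(w := wsn)),
        hist := (hist s)(w := (hist s w)(wsn := v)),
        opc := (opc s)(w := W wsn),
        net := net s + sendto w {j \<in> procs n. ((wsync s w)(w := wsn)) j = wsn - 1}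
                                 (WriteM (wsn mod 2) v) \<rparr>)"
| write_ret:
  "\<lbrakk> w \<notin> crashed s; opc s w = W wsn; card {j \<in> procs n. wsync s w j = wsn} \<ge> n - t \<rbrakk> \<Longrightarrow>
   step n t w s (s\<lparr> opc := (opc s)(w := Idle) \<rparr>)"
| read_inv:
  "\<lbrakk> i \<in> procs n; i \<notin> crashed s; opc s i = Idle; rsn = rsync s i i + 1 \<rbrakk> \<Longrightarrow>
   step n t w s
    (s\<lparr> rsync := (rsync s)(i := (rsync s i)(i := rsn)),
        opc := (opc s)(i := R1 rsn),
        net := net s + sendto i {j \<in> procs n. j \<noteq> i} ReadM \<rparr>)"
| read_mid:
  "\<lbrakk> i \<in> procs n; i \<notin> crashed s; opc s i = R1 rsn;
     card {j \<in> procs n. rsync s i j = rsn} \<ge> n - t \<rbrakk> \<Longrightarrow>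
   step n t w s (s\<lparr> opc := (opc s)(i := R2 (wsync s i i)) \<rparr>)"
| read_ret:
  "\<lbrakk> i \<in> procs n; i \<notin> crashed s; opc s i = R2 sn;
     card {j \<in> procs n. wsync s i j \<ge> sn} \<ge> n - t \<rbrakk> \<Longrightarrow>
   step n t w s (s\<lparr> opc := (opc s)(i := Idle) \<rparr>)"
  \<comment> \<open>handling of WRITE(b,v) from p_j at p_i, once its wait condition holds\<close>
| recv_write:
  "\<lbrakk> i \<in> procs n; i \<notin> crashed s; (j, i, WriteM b v) \<in># net s;
     b = (wsync s i j + 1) mod 2; wsn = wsync s i j + 1;
     s' = (if wsn = wsync s i i + 1 then
             s\<lparr> wsync := (wsync s)(i := (wsync s i)(i := wsn)),
                hist := (hist s)(i := (hist s i)(wsn := v)),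
                net := (net s - {#(j, i, WriteM b v)#}) +
                       sendto i {l \<in> procs n. ((wsync s i)(i := wsn)) l = wsn - 1}
                              (WriteM (wsn mod 2) v) \<rparr>
           else if wsn < wsync s i i then
             s\<lparr> net := (net s - {#(j, i, WriteM b v)#}) +
                       {#(i, j, WriteM ((wsn + 1) mod 2) (hist s i (wsn + 1)))#} \<rparr>
           else s\<lparr> net := net s - {#(j, i, WriteM b v)#} \<rparr>) \<rbrakk> \<Longrightarrow>
   step n t w s (s'\<lparr> wsync := (wsync s')(i := (wsync s' i)(j := wsn)) \<rparr>)"
| recv_read:
  "\<lbrakk> i \<in> procs n; i \<notin> crashed s; (j, i, ReadM) \<in># net s \<rbrakk> \<Longrightarrow>
   step n t w s (s\<lparr> net := net s - {#(j, i, ReadM)#},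
                     pend := pend s + {#(i, j, wsync s i i)#} \<rparr>)"
| serve_read:
  "\<lbrakk> i \<in> procs n; i \<notin> crashed s; (i, j, sn) \<in># pend s; wsync s i j \<ge> sn \<rbrakk> \<Longrightarrow>
   step n t w s (s\<lparr> pend := pend s - {#(i, j, sn)#},
                     net := net s + {#(i, j, ProceedM)#} \<rparr>)"
| recv_proceed:
  "\<lbrakk> i \<in> procs n; i \<notin> crashed s; (j, i, ProceedM) \<in># net s \<rbrakk> \<Longrightarrow>
   step n t w s (s\<lparr> net := net s - {#(j, i, ProceedM)#},
                     rsync := (rsync s)(i := (rsync s i)(j := rsync s i j + 1)) \<rparr>)"
| crash:
  "\<lbrakk> i \<in> procs n; i \<notin> crashed s; card (crashed s) < t \<rbrakk> \<Longrightarrow>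
   step n t w s (s\<lparr> crashed := insert i (crashed s) \<rparr>)"

inductive reachable :: "nat \<Rightarrow> nat \<Rightarrow> nat \<Rightarrow> 'v \<Rightarrow> 'v conf \<Rightarrow> bool"
  for n t w :: nat and v0 :: 'v where
  init: "init_conf n v0 s \<Longrightarrow> reachable n t w v0 s"
| stepI: "reachable n t w v0 s \<Longrightarrow> step n t w s s' \<Longrightarrow> reachable n t w v0 s'"

end

theory Submission
  imports Defs
begin

text \<open>Each process agrees with the writer
  on its history up to its own entry \<open>w_sync\<^sub>i[i]\<close>, which never exceeds the writer's. Adopting a
  value is safe because of what the channels contain: the WRITE messages in transit from \<open>p\<^sub>x\<close> to
  \<open>p\<^sub>y\<close> are exactly those with indices \<open>k\<close> in
  \<open>w_sync\<^sub>y[x] < k \<le> min (w_sync\<^sub>x[x]) (w_sync\<^sub>x[y] + 1)\<close>, each carrying \<open>k mod 2\<close> and the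
  writer's \<open>history\<^sub>w[k]\<close>. As \<open>w_sync\<^sub>x[y] \<le> w_sync\<^sub>y[x] + 1\<close>, at most two indices are in transit
  on a channel, so the parity bit tells the receiver which message carries the next index.\<close>

fun is_write :: "'v msg \<Rightarrow> bool" where
  "is_write (WriteM _ _) = True"
| "is_write ReadM = False"
| "is_write ProceedM = False"

lemma finite_procs [simp]: "finite (procs n)"
  by (simp add: procs_def)

definition writes :: "(nat \<times> nat \<times> 'v msg) multiset \<Rightarrow> (nat \<times> nat \<times> 'v msg) multiset" where
  "writes M = filter_mset (\<lambda>(_, _, m). is_write m) M"

lemma writes_empty [simp]: "writes {#} = {#}"
  by (simp add: writes_def)

lemma writes_union [simp]: "writes (M + N) = writes M + writes N"
  by (simp add: writes_def)

lemma writes_diff [simp]: "writes (M - N) = writes M - writes N"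
  by (simp add: writes_def filter_diff_mset)

lemma writes_add_mset [simp]:
  "writes (add_mset (a, b, m) M) = (if is_write m then add_mset (a, b, m) (writes M) else writes M)"
  by (simp add: writes_def)

lemma in_sendto: "z \<in># sendto p S m \<longleftrightarrow> finite S \<and> (\<exists>j\<in>S. z = (p, j, m))"
  by (cases "finite S") (auto simp: sendto_def finite_image_iff inj_on_def)

lemma writes_sendto [simp]: "writes (sendto p S m) = (if is_write m then sendto p S m else {#})"
proof -
  have "writes (sendto p S m) = filter_mset (\<lambda>_. is_write m) (sendto p S m)"
    unfolding writes_def by (rule filter_mset_cong) (auto simp: in_sendto)
  then show ?thesis
    by simp
qed

lemma in_writes_iff: "(a, b, m) \<in># writes M \<longleftrightarrow> (a, b, m) \<in># M \<and> is_write m"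
  by (simp add: writes_def)

definition write_channel ::
  "nat \<Rightarrow> nat \<Rightarrow> (nat \<times> nat \<times> 'v msg) multiset \<Rightarrow> (nat \<times> nat \<times> 'v msg) multiset" where
  "write_channel x y M = filter_mset (\<lambda>(a, b, _). a = x \<and> b = y) (writes M)"

lemma write_channel_empty [simp]: "write_channel x y {#} = {#}"
  by (simp add: write_channel_def)

lemma write_channel_union [simp]:
  "write_channel x y (M + N) = write_channel x y M + write_channel x y N"
  by (simp add: write_channel_def)

lemma write_channel_diff [simp]:
  "write_channel x y (M - N) = write_channel x y M - write_channel x y N"
  by (simp add: write_channel_def filter_diff_mset)

lemma write_channel_add_mset [simp]:
  "write_channel x y (add_mset (a, b, m) M) =
   (if a = x \<and> b = y \<and> is_write m then add_mset (a, b, m) (write_channel x y M)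
    else write_channel x y M)"
  by (simp add: write_channel_def)

lemma write_channel_sendto [simp]:
  assumes "finite S"
  shows "write_channel x y (sendto p S m) =
         (if p = x \<and> y \<in> S \<and> is_write m then {#(x, y, m)#} else {#})"
proof -
  have "{z \<in> (\<lambda>j. (p, j, m)) ` S. case z of (a, b, _) \<Rightarrow> a = x \<and> b = y} =
        (if p = x \<and> y \<in> S then {(x, y, m)} else {})"
    by auto
  then have filtered: "filter_mset (\<lambda>(a, b, _). a = x \<and> b = y) (sendto p S m) =
             (if p = x \<and> y \<in> S then {#(x, y, m)#} else {#})"
    using assms by (simp add: sendto_def filter_mset_mset_set)
  show ?thesis
  proof (cases "is_write m")
    case True
    then have "write_channel x y (sendto p S m) = filter_mset (\<lambda>(a, b, _). a = x \<and> b = y) (sendto p S m)"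
      by (simp add: write_channel_def)
    also have "\<dots> = (if p = x \<and> y \<in> S then {#(x, y, m)#} else {#})"
      by (rule filtered)
    finally show ?thesis
      using True by simp
  qed (simp add: write_channel_def)
qed

definition write_msg :: "(nat \<Rightarrow> 'v) \<Rightarrow> nat \<Rightarrow> nat \<Rightarrow> nat \<Rightarrow> nat \<times> nat \<times> 'v msg" where
  "write_msg H x y k = (x, y, WriteM (k mod 2) (H k))"

definition write_range ::
  "(nat \<Rightarrow> 'v) \<Rightarrow> nat \<Rightarrow> nat \<Rightarrow> nat \<Rightarrow> nat \<Rightarrow> (nat \<times> nat \<times> 'v msg) multiset" where
  "write_range H x y lo hi = mset (map (write_msg H x y) [Suc lo..<Suc hi])"

definition channel_carries ::
  "(nat \<Rightarrow> 'v) \<Rightarrow> nat \<Rightarrow> nat \<Rightarrow> nat \<Rightarrow> nat \<Rightarrow> (nat \<times> nat \<times> 'v msg) multiset \<Rightarrow> bool" where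
  "channel_carries H x y lo hi M \<longleftrightarrow> lo \<le> hi \<and> M = write_range H x y lo hi"

lemma channel_carries_empty: "channel_carries H x y k k {#}"
  by (simp add: channel_carries_def write_range_def)

lemma channel_carries_cong:
  assumes "channel_carries H x y lo hi M" and "\<And>k. k \<le> hi \<Longrightarrow> H' k = H k"
  shows "channel_carries H' x y lo hi M"
proof -
  have "write_range H' x y lo hi = write_range H x y lo hi"
    unfolding write_range_def write_msg_def using assms(2) by (intro arg_cong[where f = mset]) auto
  then show ?thesis
    using assms(1) by (simp add: channel_carries_def)
qed

lemma channel_carries_extend:
  assumes "channel_carries H x y lo hi M"
  shows "channel_carries H x y lo (Suc hi) (add_mset (write_msg H x y (Suc hi)) M)"
  using assms by (simp add: channel_carries_def write_range_def)

lemma channel_carries_consume: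
  assumes "channel_carries H x y lo hi M" and "lo < hi"
  shows "channel_carries H x y (Suc lo) hi (M - {#write_msg H x y (Suc lo)#})"
proof -
  have "[Suc lo..<Suc hi] = Suc lo # [Suc (Suc lo)..<Suc hi]"
    using assms(2) by (simp add: upt_conv_Cons)
  then show ?thesis
    using assms by (simp add: channel_carries_def write_range_def del: upt_Suc)
qed

text \<open>With at most two indices in transit, the parity bit identifies the next one.\<close>
lemma channel_carries_next_write:
  assumes "channel_carries H x y lo hi M" and "hi \<le> Suc (Suc lo)"
    and "(x, y, WriteM (Suc lo mod 2) v) \<in># M"
  shows "lo < hi" and "v = H (Suc lo)"
proof -
  obtain k where k: "k \<in> set [Suc lo..<Suc hi]" "(x, y, WriteM (Suc lo mod 2) v) = write_msg H x y k"
    using assms(1,3) by (auto simp: channel_carries_def write_range_def)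
  then have "k = Suc lo"
    using assms(2) by (auto simp: write_msg_def) presburger
  with k show "lo < hi" and "v = H (Suc lo)"
    by (auto simp: write_msg_def)
qed

text \<open>\<open>p\<^sub>x\<close> forwards index \<open>k\<close> to \<open>p\<^sub>y\<close> once it knows \<open>k\<close> itself and has heard \<open>k - 1\<close> from \<open>p\<^sub>y\<close>.\<close>
definition sent_upto :: "'v conf \<Rightarrow> nat \<Rightarrow> nat \<Rightarrow> nat" where
  "sent_upto s x y = min (wsync s x x) (Suc (wsync s x y))"

lemma sent_upto_eq:
  "wsync s x y \<le> wsync s x x \<Longrightarrow>
   sent_upto s x y = (if wsync s x y = wsync s x x then wsync s x x else Suc (wsync s x y))"
  by (simp add: sent_upto_def)

lemma channel_carries_advance:
  assumes "channel_carries H x y lo (if c = r then r else Suc c) M"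
  shows "channel_carries H x y lo (if c = r then Suc r else Suc c)
           (if c = r then add_mset (write_msg H x y (Suc r)) M else M)"
  using assms channel_carries_extend by (cases "c = r") auto

definition hist_inv :: "nat \<Rightarrow> nat \<Rightarrow> 'v conf \<Rightarrow> bool" where
  "hist_inv n w s \<longleftrightarrow>
     (\<forall>i. wsync s i i \<le> wsync s w w) \<and>
     (\<forall>i k. k \<le> wsync s i i \<longrightarrow> hist s i k = hist s w k) \<and>
     (\<forall>i j. wsync s i j \<le> wsync s i i) \<and>
     (\<forall>(x, y, _) \<in># writes (net s). x \<noteq> y \<and> x \<in> procs n \<and> y \<in> procs n) \<and>
     (\<forall>x\<in>procs n. \<forall>y\<in>procs n. x \<noteq> y \<longrightarrow>
        channel_carries (hist s w) x y (wsync s y x) (sent_upto s x y) (write_channel x y (net s)))"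

lemma hist_inv_init: "init_conf n v0 s \<Longrightarrow> hist_inv n w s"
  by (simp add: init_conf_def hist_inv_def sent_upto_def write_channel_def writes_def channel_carries_empty)

lemma hist_inv_frame:
  assumes "hist_inv n w s" and "wsync s' = wsync s" and "hist s' = hist s"
    and "writes (net s') = writes (net s)"
  shows "hist_inv n w s'"
  using assms by (simp add: hist_inv_def sent_upto_def write_channel_def)

locale write_invocation =
  fixes n w :: nat and s s' :: "'v conf" and wsn :: nat and v :: 'v
  assumes inv: "hist_inv n w s" and writer: "w \<in> procs n" and wsn: "wsn = wsync s w w + 1"
    and invoked: "s' = s\<lparr> wsync := (wsync s)(w := (wsync s w)(w := wsn)),
        hist := (hist s)(w := (hist s w)(wsn := v)),
        opc := (opc s)(w := W wsn),
        net := net s + sendto w {j \<in> procs n. ((wsync s w)(w := wsn)) j = wsn - 1}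
                                 (WriteM (wsn mod 2) v) \<rparr>"
begin

lemma wsync': "wsync s' = (wsync s)(w := (wsync s w)(w := Suc (wsync s w w)))"
  using wsn invoked by simp

lemma hist': "hist s' = (hist s)(w := (hist s w)(Suc (wsync s w w) := v))"
  using wsn invoked by simp

lemma net': "net s' = net s + sendto w {j \<in> procs n. j \<noteq> w \<and> wsync s w j = wsync s w w}
                                       (WriteM (Suc (wsync s w w) mod 2) v)"
proof -
  have "{j \<in> procs n. ((wsync s w)(w := wsn)) j = wsn - 1} =
        {j \<in> procs n. j \<noteq> w \<and> wsync s w j = wsync s w w}"
    using wsn by auto
  then show ?thesis
    using wsn invoked by simp
qed

lemma below_writer: "wsync s x x \<le> wsync s w w"
  using inv by (simp add: hist_inv_def)

lemma writer_prefix_unchanged: "k \<le> wsync s w w \<Longrightarrow> hist s' w k = hist s w k"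
  by (simp add: hist')

lemma channel_after:
  assumes xy: "x \<in> procs n" "y \<in> procs n" "x \<noteq> y"
  shows "channel_carries (hist s' w) x y (wsync s' y x) (sent_upto s' x y) (write_channel x y (net s'))"
proof -
  have "channel_carries (hist s w) x y (wsync s y x) (sent_upto s x y) (write_channel x y (net s))"
    using inv xy by (simp add: hist_inv_def)
  then have old: "channel_carries (hist s' w) x y (wsync s y x) (sent_upto s x y)
                    (write_channel x y (net s))"
    by (rule channel_carries_cong)
      (use writer_prefix_unchanged below_writer[of x] in \<open>auto simp: sent_upto_def\<close>)
  show ?thesis
  proof (cases "x = w")
    case True
    have le: "wsync s w y \<le> wsync s w w"
      using inv by (simp add: hist_inv_def)
    then have "channel_carries (hist s' w) w y (wsync s y w)
                 (if wsync s w y = wsync s w w then wsync s w w else Suc (wsync s w y))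
                 (write_channel w y (net s))"
      using old True sent_upto_eq[of s w y] by (simp split: if_splits)
    from channel_carries_advance[OF this] show ?thesis
      using True xy le by (cases "wsync s w y = wsync s w w")
        (auto simp: sent_upto_def wsync' net' write_msg_def hist')
  next
    case False
    then show ?thesis
      using old by (auto simp: wsync' net' sent_upto_def)
  qed
qed

lemma hist_inv_after: "hist_inv n w s'"
proof -
  have msgs: "\<forall>(x, y, _) \<in># writes (net s'). x \<noteq> y \<and> x \<in> procs n \<and> y \<in> procs n"
    using inv writer by (auto simp: hist_inv_def net' in_sendto)
  have agree: "\<forall>i k. k \<le> wsync s' i i \<longrightarrow> hist s' i k = hist s' w k"
  proof (intro allI impI)
    fix i k
    assume k: "k \<le> wsync s' i i"
    show "hist s' i k = hist s' w k"
    proof (cases "i = w")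
      case False
      with k have k': "k \<le> wsync s i i"
        by (simp add: wsync')
      from False have "hist s' i k = hist s i k"
        by (simp add: hist')
      also have "\<dots> = hist s w k"
        using inv k' by (simp add: hist_inv_def)
      also have "\<dots> = hist s' w k"
        using k' below_writer[of i] by (simp add: writer_prefix_unchanged)
      finally show ?thesis .
    qed simp
  qed
  have rows: "\<forall>i j. wsync s' i j \<le> wsync s' i i"
    using inv by (simp add: hist_inv_def wsync' le_SucI)
  have below: "\<forall>i. wsync s' i i \<le> wsync s' w w"
    using below_writer by (simp add: wsync' le_SucI)
  have channel: "\<forall>x\<in>procs n. \<forall>y\<in>procs n. x \<noteq> y \<longrightarrow>
      channel_carries (hist s' w) x y (wsync s' y x) (sent_upto s' x y) (write_channel x y (net s'))"
    using channel_after by blast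
  show ?thesis
    unfolding hist_inv_def using msgs agree rows below channel by blast
qed

end

locale write_receipt =
  fixes n w :: nat and s s' u :: "'v conf" and i j b wsn :: nat and v :: 'v
  assumes inv: "hist_inv n w s" and receiver: "i \<in> procs n"
    and received: "(j, i, WriteM b v) \<in># net s"
    and parity: "b = (wsync s i j + 1) mod 2" and wsn: "wsn = wsync s i j + 1"
    and handled: "u = (if wsn = wsync s i i + 1 then
             s\<lparr> wsync := (wsync s)(i := (wsync s i)(i := wsn)),
                hist := (hist s)(i := (hist s i)(wsn := v)),
                net := (net s - {#(j, i, WriteM b v)#}) +
                       sendto i {l \<in> procs n. ((wsync s i)(i := wsn)) l = wsn - 1}
                              (WriteM (wsn mod 2) v) \<rparr>
           else if wsn < wsync s i i then
             s\<lparr> net := (net s - {#(j, i, WriteM b v)#}) +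
                       {#(i, j, WriteM ((wsn + 1) mod 2) (hist s i (wsn + 1)))#} \<rparr>
           else s\<lparr> net := net s - {#(j, i, WriteM b v)#} \<rparr>)"
    and recorded: "s' = u\<lparr> wsync := (wsync u)(i := (wsync u i)(j := wsn)) \<rparr>"
begin

lemma receipt_effect:
  "wsync s' = (wsync s)(i := (wsync s i)
      (i := if wsync s i j = wsync s i i then Suc (wsync s i i) else wsync s i i,
       j := Suc (wsync s i j))) \<and>
   hist s' = (if wsync s i j = wsync s i i
      then (hist s)(i := (hist s i)(Suc (wsync s i i) := v)) else hist s) \<and>
   net s' = net s - {#(j, i, WriteM b v)#} +
      (if wsync s i j = wsync s i i
       then sendto i {l \<in> procs n. l \<noteq> i \<and> wsync s i l = wsync s i i}
              (WriteM (Suc (wsync s i i) mod 2) v)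
       else if Suc (wsync s i j) < wsync s i i
       then {#(i, j, WriteM (Suc (Suc (wsync s i j)) mod 2) (hist s i (Suc (Suc (wsync s i j)))))#}
       else {#})"
proof (cases "wsync s i j = wsync s i i")
  case True
  then have "{l \<in> procs n. ((wsync s i)(i := wsn)) l = wsn - 1} =
             {l \<in> procs n. l \<noteq> i \<and> wsync s i l = wsync s i i}"
    using wsn by auto
  with True show ?thesis
    using wsn handled recorded by simp
next
  case False
  then show ?thesis
    using wsn handled recorded by simp
qed

lemmas wsync' = receipt_effect[THEN conjunct1]
  and hist' = receipt_effect[THEN conjunct2, THEN conjunct1]
  and net' = receipt_effect[THEN conjunct2, THEN conjunct2]

lemma sender: "j \<noteq> i" "j \<in> procs n"
proof -
  have "(j, i, WriteM b v) \<in># writes (net s)"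
    using received by (simp add: in_writes_iff)
  then show "j \<noteq> i" "j \<in> procs n"
    using inv unfolding hist_inv_def by fastforce+
qed

lemma channel_before: "x \<in> procs n \<Longrightarrow> y \<in> procs n \<Longrightarrow> x \<noteq> y \<Longrightarrow>
    channel_carries (hist s w) x y (wsync s y x) (sent_upto s x y) (write_channel x y (net s))"
  using inv by (simp add: hist_inv_def)

lemma received_next: "wsync s i j < sent_upto s j i" and received_value: "v = hist s w (Suc (wsync s i j))"
proof -
  have "wsync s j i \<le> sent_upto s i j"
    using channel_before[OF receiver sender(2)] sender by (simp add: channel_carries_def)
  then have "sent_upto s j i \<le> Suc (Suc (wsync s i j))"
    by (auto simp: sent_upto_def min_def split: if_splits)
  moreover have "(j, i, WriteM (Suc (wsync s i j) mod 2) v) \<in># write_channel j i (net s)"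
    using received parity by (simp add: write_channel_def in_writes_iff)
  moreover have "channel_carries (hist s w) j i (wsync s i j) (sent_upto s j i) (write_channel j i (net s))"
    using channel_before[OF sender(2) receiver] sender(1) by simp
  ultimately show "wsync s i j < sent_upto s j i" and "v = hist s w (Suc (wsync s i j))"
    by (blast intro: channel_carries_next_write(1), blast intro: channel_carries_next_write(2))
qed

lemma received_below_writer: "Suc (wsync s i j) \<le> wsync s w w"
proof -
  have "sent_upto s j i \<le> wsync s w w"
    using inv by (simp add: hist_inv_def sent_upto_def min.coboundedI1)
  then show ?thesis
    using received_next by simp
qed

lemma writer_unchanged: "wsync s' w w = wsync s w w" "hist s' w = hist s w"
  using received_below_writer sender(1) by (auto simp: wsync' hist')

lemma consumed_channel:
  "channel_carries (hist s w) j i (wsync s' i j) (sent_upto s' j i) (write_channel j i (net s'))"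
proof -
  have "wsync s' i j = Suc (wsync s i j)" and "sent_upto s' j i = sent_upto s j i"
    using sender(1) by (simp_all add: wsync' sent_upto_def)
  moreover have "write_channel j i (net s') = write_channel j i (net s) - {#(j, i, WriteM b v)#}"
    using sender(1) by (simp add: net')
  moreover have "(j, i, WriteM b v) = write_msg (hist s w) j i (Suc (wsync s i j))"
    using received_value parity by (simp add: write_msg_def)
  ultimately show ?thesis
    using channel_carries_consume[OF channel_before[OF sender(2) receiver] received_next] sender(1)
    by simp
qed

lemma receiver_channel:
  assumes y: "y \<in> procs n" "y \<noteq> i"
  shows "channel_carries (hist s w) i y (wsync s' y i) (sent_upto s' i y) (write_channel i y (net s'))"
proof -
  let ?H = "hist s w" and ?a = "wsync s i j" and ?r = "wsync s i i"
  have old: "channel_carries ?H i y (wsync s y i) (sent_upto s i y) (write_channel i y (net s))"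
    using channel_before[OF receiver y(1)] y(2) by simp
  have le: "wsync s i y \<le> ?r" "?a \<le> ?r"
    using inv by (simp_all add: hist_inv_def)
  have lo': "wsync s' y i = wsync s y i"
    using y(2) by (simp add: wsync')
  consider (adopt) "?a = ?r" | (reply) "Suc ?a < ?r" | (ignore) "Suc ?a = ?r"
    using le by linarith
  then show ?thesis
  proof cases
    case adopt
    have "channel_carries ?H i y (wsync s y i) (if wsync s i y = ?r then ?r else Suc (wsync s i y))
            (write_channel i y (net s))"
      using old sent_upto_eq[of s i y] le by (simp split: if_splits)
    from channel_carries_advance[OF this] show ?thesis
      using adopt y le received_value sender(1)
      by (auto simp: lo' sent_upto_def wsync' net' write_msg_def)
  next
    case reply
    show ?thesis
    proof (cases "y = j")
      case True
      have "hist s i (Suc (Suc ?a)) = ?H (Suc (Suc ?a))"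
        using inv reply by (simp add: hist_inv_def)
      moreover have "sent_upto s i j = Suc ?a"
        using reply by (simp add: sent_upto_def)
      ultimately show ?thesis
        using channel_carries_extend[OF old] True reply sender(1)
        by (simp add: lo' sent_upto_def wsync' net' write_msg_def)
    next
      case False
      then show ?thesis
        using old reply y(2) sender(1) by (simp add: lo' sent_upto_def wsync' net')
    qed
  next
    case ignore
    then show ?thesis
      using old y(2) sender(1) by (auto simp: lo' sent_upto_def wsync' net')
  qed
qed

lemma other_channel:
  assumes "x \<in> procs n" "y \<in> procs n" "x \<noteq> y" "x \<noteq> i" "\<not> (x = j \<and> y = i)"
  shows "channel_carries (hist s w) x y (wsync s' y x) (sent_upto s' x y) (write_channel x y (net s'))"
  using channel_before[OF assms(1-3)] assms by (auto simp: wsync' net' sent_upto_def)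

lemma hist_inv_after: "hist_inv n w s'"
proof -
  have le: "wsync s i j \<le> wsync s i i"
    using inv by (simp add: hist_inv_def)
  have channel: "\<forall>x\<in>procs n. \<forall>y\<in>procs n. x \<noteq> y \<longrightarrow>
      channel_carries (hist s' w) x y (wsync s' y x) (sent_upto s' x y) (write_channel x y (net s'))"
    using consumed_channel receiver_channel other_channel by (auto simp: writer_unchanged)
  have msgs: "\<forall>(x, y, _) \<in># writes (net s'). x \<noteq> y \<and> x \<in> procs n \<and> y \<in> procs n"
    using inv receiver sender by (auto simp: hist_inv_def net' in_sendto dest: in_diffD)
  have "Suc (wsync s i j) \<le> wsync s' i i"
    using le by (simp add: wsync')
  then have rows: "\<forall>x z. wsync s' x z \<le> wsync s' x x"
    using inv by (auto simp: hist_inv_def wsync' le_SucI)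
  have below: "\<forall>x. wsync s' x x \<le> wsync s' w w"
    using inv received_below_writer by (auto simp: hist_inv_def wsync' writer_unchanged)
  have agree: "\<forall>x k. k \<le> wsync s' x x \<longrightarrow> hist s' x k = hist s' w k"
  proof (intro allI impI)
    fix x k
    assume k: "k \<le> wsync s' x x"
    have "hist s' x k = hist s w k"
    proof (cases "x = i \<and> wsync s i j = wsync s i i \<and> k = Suc (wsync s i i)")
      case True
      then show ?thesis
        using received_value by (simp add: hist')
    next
      case False
      with k have "k \<le> wsync s x x" and "hist s' x k = hist s x k"
        by (auto simp: wsync' hist' split: if_splits)
      with inv show ?thesis
        by (simp add: hist_inv_def)
    qed
    then show "hist s' x k = hist s' w k"
      by (simp add: writer_unchanged)
  qed
  show ?thesis
    unfolding hist_inv_def using below agree rows msgs channel by blast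
qed

end

lemma hist_inv_step:
  assumes writer: "w \<in> procs n" and inv: "hist_inv n w s" and step: "step n t w s s'"
  shows "hist_inv n w s'"
  using step
proof cases
  case (write_inv wsn v)
  interpret write_invocation n w s s' wsn v
    using write_inv inv writer by unfold_locales assumption+
  show ?thesis
    by (rule hist_inv_after)
next
  case (recv_write i j b v wsn u)
  interpret write_receipt n w s s' u i j b wsn v
    using recv_write inv by unfold_locales assumption+
  show ?thesis
    by (rule hist_inv_after)
qed (rule hist_inv_frame[OF inv]; simp)+

lemma hist_inv_reachable:
  "reachable n t w v0 s \<Longrightarrow> w \<in> procs n \<Longrightarrow> hist_inv n w s"
  by (induction rule: reachable.induct) (auto intro: hist_inv_init hist_inv_step)

theorem lemma4:
  fixes n t w :: nat and v0 :: 'v and s :: "'v conf"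
  assumes "2 * t < n" and "w \<in> procs n"
    and "reachable n t w v0 s" and "i \<in> procs n"
  shows "prefix (map (hist s i) [0..<Suc (wsync s i i)])
                (map (hist s w) [0..<Suc (wsync s w w)])"
proof -
  \<comment> \<open>Safety does not depend on the failure bound \<open>2 * t < n\<close>.\<close>
  have inv: "hist_inv n w s"
    using assms(3,2) by (rule hist_inv_reachable)
  then have "wsync s i i \<le> wsync s w w" and "\<forall>k \<le> wsync s i i. hist s i k = hist s w k"
    by (simp_all add: hist_inv_def)
  then have "map (hist s i) [0..<Suc (wsync s i i)] =
             take (Suc (wsync s i i)) (map (hist s w) [0..<Suc (wsync s w w)])"
    by (simp add: take_map min_absorb2 del: upt_Suc)
  then show ?thesis
    by (simp add: take_is_prefix del: upt_Suc)
qed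

end
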